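(* Any streaming algorithm (possibly randomized, succeeding with constant probability) that outputs a multiplicative approximation, to any factor, of the optimal total weight for the weighted tree augmentation problem in the link arrival model requires $\Omega(n)$ bits of space.
   Context: Weighted tree augmentation problem: given a spanning tree $T$ on an $n$-vertex set $V$ and a set of links $L\subseteq\binom{V}{2}$ with nonnegative integer weights, find a minimum-weight $S\subseteq L$ such that $(V,E(T)\cup S)$ is $2$-edge-connected. Link arrival model: $T$ is given to the algorithm in advance (its storage not counted), and the weighted links arrive one at a time in an arbitrary order in a single pass. *)

theory Defs
  imports "HOL-Probability.Probability_Mass_Function"
begin

text \<open>Vertex set is {0..<n}. An (undirected) edge / link is a 2-element set {u,v}.\<close>

definition is_edge :: "nat \<Rightarrow> nat set \<Rightarrow> bool" where
  "is_edge n e \<longleftrightarrow> (\<exists>u v. u < n \<and> v < n \<and> u \<noteq> v \<and> e = {u, v})"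

definition connected_on :: "nat \<Rightarrow> nat set set \<Rightarrow> bool" where
  "connected_on n E \<longleftrightarrow> (\<forall>u<n. \<forall>v<n. (u, v) \<in> {(x, y). {x, y} \<in> E}\<^sup>*)"

text \<open>2-edge-connectivity of a multigraph on {0..<n} whose edges are indexed by I
  (edge i has endpoints ep i): connected, and stays connected after deleting any single edge.\<close>
definition two_edge_connected :: "nat \<Rightarrow> 'i set \<Rightarrow> ('i \<Rightarrow> nat set) \<Rightarrow> bool" where
  "two_edge_connected n I ep \<longleftrightarrow>
     connected_on n (ep ` I) \<and> (\<forall>i\<in>I. connected_on n (ep ` (I - {i})))"

definition spanning_tree :: "nat \<Rightarrow> nat set set \<Rightarrow> bool" where
  "spanning_tree n T \<longleftrightarrow> n \<ge> 1 \<and> T \<subseteq> {e. is_edge n e} \<and> connected_on n T \<and> card T = n - 1"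

text \<open>(V, E(T) \<union> S) as a multigraph (tree edges and links kept apart) is 2-edge-connected.\<close>
definition augments :: "nat \<Rightarrow> nat set set \<Rightarrow> nat set set \<Rightarrow> bool" where
  "augments n T S \<longleftrightarrow> two_edge_connected n (Inl ` T \<union> Inr ` S) (case_sum id id)"

definition valid_stream :: "nat \<Rightarrow> (nat set \<times> nat) list \<Rightarrow> bool" where
  "valid_stream n xs \<longleftrightarrow> distinct (map fst xs) \<and> (\<forall>(l, w)\<in>set xs. is_edge n l)"

definition feasible_sol :: "nat \<Rightarrow> nat set set \<Rightarrow> (nat set \<times> nat) list \<Rightarrow> (nat set \<times> nat) set \<Rightarrow> bool" where
  "feasible_sol n T xs S \<longleftrightarrow> S \<subseteq> set xs \<and> augments n T (fst ` S)"

definition tap_feasible :: "nat \<Rightarrow> nat set set \<Rightarrow> (nat set \<times> nat) list \<Rightarrow> bool" where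
  "tap_feasible n T xs \<longleftrightarrow> (\<exists>S. feasible_sol n T xs S)"

definition opt_tap :: "nat \<Rightarrow> nat set set \<Rightarrow> (nat set \<times> nat) list \<Rightarrow> nat" where
  "opt_tap n T xs = Min {sum snd S | S. feasible_sol n T xs S}"

text \<open>State of a one-pass streaming algorithm with random seed r after reading the stream.\<close>
definition run :: "('r \<Rightarrow> 's) \<Rightarrow> ('r \<Rightarrow> 's \<Rightarrow> nat set \<times> nat \<Rightarrow> 's) \<Rightarrow> 'r \<Rightarrow> (nat set \<times> nat) list \<Rightarrow> 's" where
  "run init step r xs = foldl (step r) (init r) xs"

definition good_estimate :: "real \<Rightarrow> real \<Rightarrow> real \<Rightarrow> bool" where
  "good_estimate \<alpha> opt x \<longleftrightarrow> opt / \<alpha> \<le> x \<and> x \<le> \<alpha> * opt"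

definition tap_streaming_alg ::
  "nat \<Rightarrow> nat set set \<Rightarrow> real \<Rightarrow> real \<Rightarrow> 'r pmf \<Rightarrow> ('r \<Rightarrow> 's) \<Rightarrow> ('r \<Rightarrow> 's \<Rightarrow> nat set \<times> nat \<Rightarrow> 's)
     \<Rightarrow> ('r \<Rightarrow> 's \<Rightarrow> real) \<Rightarrow> bool" where
  "tap_streaming_alg n T \<alpha> p R init step out \<longleftrightarrow>
     (\<forall>xs. valid_stream n xs \<and> tap_feasible n T xs \<longrightarrow>
        measure_pmf.prob R {r. good_estimate \<alpha> (real (opt_tap n T xs)) (out r (run init step r xs))} \<ge> p)"

text \<open>Uses at most s bits of memory: at most 2^s distinct memory states ever occur.\<close>
definition uses_space :: "nat \<Rightarrow> 'r pmf \<Rightarrow> ('r \<Rightarrow> 's) \<Rightarrow> ('r \<Rightarrow> 's \<Rightarrow> nat set \<times> nat \<Rightarrow> 's) \<Rightarrow> nat \<Rightarrow> bool" where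
  "uses_space n R init step s \<longleftrightarrow>
     (let Q = {run init step r xs | r xs. r \<in> set_pmf R \<and> valid_stream n xs}
      in finite Q \<and> card Q \<le> 2 ^ s)"

end

theory Submission
  imports Defs
begin

(* Reduction from the one-way index problem. Take the star with centre 0, leaves 1..m and a
   further leaf m+1 serving as a hub. A vector x in [K]^m is encoded by the links {0, j+1} of
   weight W^(x j), where W > alpha^2; the query for index i appends zero-weight links joining the
   hub to the centre and to every leaf except i+1. Every leaf other than i+1 is then covered
   through the hub, while leaf i+1 needs its own link, so the optimum is exactly W^(x i) and any
   alpha-approximation of it reveals x i.
   Since the success probability exceeds 1/2, some fixed random seed answers correctly on more
   than half of all pairs (x, i), so a constant fraction of the vectors x have at least half of
   their coordinates recoverable from the memory state reached after the encoding links. Only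
   2^s * 2^m * K^(m - m/2) vectors can be that well determined by 2^s states, which for K = 256
   forces s >= m = n - 2. *)

lemma connected_on_mono:
  assumes "connected_on n E" and "E \<subseteq> E'"
  shows "connected_on n E'"
proof -
  have "{(x, y). {x, y} \<in> E}\<^sup>* \<subseteq> {(x, y). {x, y} \<in> E'}\<^sup>*"
    using \<open>E \<subseteq> E'\<close> by (intro rtrancl_mono) auto
  then show ?thesis
    using assms(1) unfolding connected_on_def by blast
qed

lemma two_edge_connectedI:
  assumes "I \<noteq> {}" and "\<And>d. d \<in> I \<Longrightarrow> connected_on n (ep ` (I - {d}))"
  shows "two_edge_connected n I ep"
proof -
  obtain d where "d \<in> I" using \<open>I \<noteq> {}\<close> by blast
  then have "connected_on n (ep ` I)"
    by (rule connected_on_mono[OF assms(2)]) auto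
  with assms(2) show ?thesis
    unfolding two_edge_connected_def by blast
qed

lemma is_edgeI: "u < n \<Longrightarrow> v < n \<Longrightarrow> u \<noteq> v \<Longrightarrow> is_edge n {u, v}"
  unfolding is_edge_def by blast

lemma connected_on_via_center:
  assumes "\<And>v. 0 < v \<Longrightarrow> v < n \<Longrightarrow> {0, v} \<in> E \<or> (\<exists>z. {v, z} \<in> E \<and> {0, z} \<in> E)"
  shows "connected_on n E"
proof -
  let ?R = "{(x, y). {x, y} \<in> E}"
  have "(0, v) \<in> ?R\<^sup>* \<and> (v, 0) \<in> ?R\<^sup>*" if "v < n" for v
  proof (cases "v = 0")
    case False
    then consider "{0, v} \<in> E" | z where "{v, z} \<in> E" "{0, z} \<in> E"
      using assms[of v] \<open>v < n\<close> by auto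
    then show ?thesis
    proof cases
      case 1
      then have "(0, v) \<in> ?R" "(v, 0) \<in> ?R" by (auto simp: insert_commute)
      then show ?thesis by auto
    next
      case 2
      then have "(0, z) \<in> ?R" "(z, v) \<in> ?R" "(v, z) \<in> ?R" "(z, 0) \<in> ?R"
        by (auto simp: insert_commute)
      then show ?thesis by (meson converse_rtrancl_into_rtrancl r_into_rtrancl)
    qed
  qed simp
  then show ?thesis
    unfolding connected_on_def by (meson rtrancl_trans)
qed

lemma not_connected_on_if_isolated:
  assumes "\<forall>e\<in>E. v \<notin> e" and "v < n" "u < n" "u \<noteq> v"
  shows "\<not> connected_on n E"
proof
  assume "connected_on n E"
  then have "(v, u) \<in> {(x, y). {x, y} \<in> E}\<^sup>*"
    using assms unfolding connected_on_def by blast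
  then have "u = v"
    by (induction rule: rtrancl_induct) (use assms(1) in auto)
  with \<open>u \<noteq> v\<close> show False ..
qed

definition star_tree :: "nat \<Rightarrow> nat set set" where
  "star_tree n = (\<lambda>v. {0, v}) ` {1..<n}"

lemma spanning_tree_star_tree:
  assumes "1 \<le> n"
  shows "spanning_tree n (star_tree n)"
  unfolding spanning_tree_def
proof (intro conjI)
  show "star_tree n \<subseteq> {e. is_edge n e}"
    using assms by (auto simp: star_tree_def intro: is_edgeI)
  show "connected_on n (star_tree n)"
    by (rule connected_on_via_center) (auto simp: star_tree_def)
  have "inj_on (\<lambda>v. {0::nat, v}) {1..<n}"
    by (auto simp: inj_on_def doubleton_eq_iff)
  then show "card (star_tree n) = n - 1"
    by (simp add: star_tree_def card_image)
qed (use assms in simp)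

definition encoding_links :: "nat \<Rightarrow> nat \<Rightarrow> (nat \<Rightarrow> nat) \<Rightarrow> (nat set \<times> nat) list" where
  "encoding_links m W x = map (\<lambda>j. ({0, Suc j}, W ^ x j)) [0..<m]"

definition query_links :: "nat \<Rightarrow> nat \<Rightarrow> (nat set \<times> nat) list" where
  "query_links m i = map (\<lambda>j. ({Suc j, Suc m}, 0)) (filter (\<lambda>j. j \<noteq> i) [0..<m]) @ [({0, Suc m}, 0)]"

lemma set_encoding_links: "set (encoding_links m W x) = (\<lambda>j. ({0, Suc j}, W ^ x j)) ` {..<m}"
  by (auto simp: encoding_links_def)

lemma set_query_links:
  "set (query_links m i) = insert ({0, Suc m}, 0) ((\<lambda>j. ({Suc j, Suc m}, 0)) ` {j. j < m \<and> j \<noteq> i})"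
  by (auto simp: query_links_def)

lemma valid_stream_appendD: "valid_stream n (xs @ ys) \<Longrightarrow> valid_stream n xs"
  by (auto simp: valid_stream_def)

lemma valid_stream_encoding_query_links:
  "valid_stream (Suc (Suc m)) (encoding_links m W x @ query_links m i)"
  unfolding valid_stream_def
proof
  have "inj_on (\<lambda>j. {0::nat, Suc j}) A" "inj_on (\<lambda>j. {Suc j, Suc m}) A" for A
    by (auto simp: inj_on_def doubleton_eq_iff)
  then show "distinct (map fst (encoding_links m W x @ query_links m i))"
    by (auto simp: encoding_links_def query_links_def distinct_map image_iff doubleton_eq_iff comp_def)
  show "\<forall>(l, w)\<in>set (encoding_links m W x @ query_links m i). is_edge (Suc (Suc m)) l"
    by (auto simp: set_encoding_links set_query_links intro: is_edgeI)
qed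

lemma leaf_link_unique:
  assumes "(l, w) \<in> set (encoding_links m W x @ query_links m i)" and "Suc i \<in> l" and "i < m"
  shows "(l, w) = ({0, Suc i}, W ^ x i)"
  using assms by (auto simp: set_encoding_links set_query_links)

lemma augments_star_tree_query_solution:
  assumes "i < m"
  shows "augments (Suc (Suc m)) (star_tree (Suc (Suc m)))
           (insert {0, Suc i} (fst ` set (query_links m i)))"
  unfolding augments_def
proof (rule two_edge_connectedI)
  let ?I = "Inl ` star_tree (Suc (Suc m)) \<union> Inr ` insert {0, Suc i} (fst ` set (query_links m i))"
  show "?I \<noteq> {}" by blast
  fix d
  let ?E = "case_sum id id ` (?I - {d})"
  show "connected_on (Suc (Suc m)) ?E"
  proof (rule connected_on_via_center)
    fix v assume v: "0 < v" "v < Suc (Suc m)"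
    have kept: "e \<in> ?E" if "a \<in> ?I" "a \<noteq> d" "e = case_sum id id a" for a e
      using that by (intro image_eqI[of e _ a]) auto
    have tree_edge: "Inl {0, v} \<in> ?I"
      using v by (auto simp: star_tree_def)
    obtain k where "v = Suc k" "k \<le> m"
      using v by (cases v) auto
    then consider "v = Suc i \<or> v = Suc m" | j where "j < m" "j \<noteq> i" "v = Suc j"
      using le_neq_implies_less by blast
    then show "{0, v} \<in> ?E \<or> (\<exists>z. {v, z} \<in> ?E \<and> {0, z} \<in> ?E)"
    proof cases
      case 1
      \<comment> \<open>the edge {0, v} is both a tree edge and a link, so one copy survives\<close>
      then have "Inr {0, v} \<in> ?I"
        by (auto simp: set_query_links)
      then have "{0, v} \<in> ?E"
        using kept[OF tree_edge _ refl] kept[of "Inr {0, v}", OF _ _ refl]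
        by (cases "d = Inl {0, v}") simp_all
      then show ?thesis ..
    next
      case 2
      have hub_link: "Inr {v, Suc m} \<in> ?I" and hub_edge: "Inl {0, Suc m} \<in> ?I"
        using 2 by (auto simp: set_query_links star_tree_def image_iff)
      show ?thesis
      proof (cases "d = Inl {0, v}")
        case True
        have "{0, Suc m} \<noteq> {0, v}"
          using 2 by (auto simp: doubleton_eq_iff)
        then have "{v, Suc m} \<in> ?E" "{0, Suc m} \<in> ?E"
          using kept[OF hub_link _ refl] kept[OF hub_edge _ refl] True by simp_all
        then show ?thesis by (intro disjI2 exI[of _ "Suc m"] conjI)
      next
        case False
        then show ?thesis
          using kept[OF tree_edge _ refl] by simp
      qed
    qed
  qed
qed

lemma feasible_sol_contains_leaf_link:
  assumes "i < m"
    and feasible: "feasible_sol (Suc (Suc m)) (star_tree (Suc (Suc m)))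
                     (encoding_links m W x @ query_links m i) S"
  shows "({0, Suc i}, W ^ x i) \<in> S"
proof (rule ccontr)
  assume not_in: "({0, Suc i}, W ^ x i) \<notin> S"
  let ?I = "Inl ` star_tree (Suc (Suc m)) \<union> Inr ` fst ` S"
  let ?d = "Inl {0, Suc i} :: nat set + nat set"
  let ?E = "case_sum id id ` (?I - {?d})"
  have "?d \<in> ?I"
    by (intro UnI1 imageI) (use \<open>i < m\<close> in \<open>auto simp: star_tree_def\<close>)
  have "two_edge_connected (Suc (Suc m)) ?I (case_sum id id)"
    using feasible by (simp add: feasible_sol_def augments_def)
  then have "\<forall>d\<in>?I. connected_on (Suc (Suc m)) (case_sum id id ` (?I - {d}))"
    unfolding two_edge_connected_def by (rule conjunct2)
  then have "connected_on (Suc (Suc m)) ?E"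
    using \<open>?d \<in> ?I\<close> by (rule bspec)
  moreover have "\<forall>e \<in> ?E. Suc i \<notin> e"
  proof (intro ballI notI)
    fix e assume "e \<in> ?E" "Suc i \<in> e"
    then obtain a where a: "e = case_sum id id a" "a \<in> ?I" "a \<noteq> ?d"
      by (auto elim!: imageE)
    show False
    proof (cases a)
      case (Inl t)
      then obtain v where "t = {0, v}"
        using a(2) by (auto simp: star_tree_def)
      moreover have "v \<noteq> Suc i"
        using a(3) Inl calculation by auto
      ultimately show False
        using \<open>Suc i \<in> e\<close> a(1) Inl by simp
    next
      case (Inr l)
      then obtain w where "(l, w) \<in> S"
        using a(2) by auto
      then have "(l, w) = ({0, Suc i}, W ^ x i)"
        using feasible \<open>Suc i \<in> e\<close> a(1) Inr \<open>i < m\<close>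
        by (intro leaf_link_unique) (auto simp: feasible_sol_def)
      with \<open>(l, w) \<in> S\<close> not_in show False by simp
    qed
  qed
  then have "\<not> connected_on (Suc (Suc m)) ?E"
    by (rule not_connected_on_if_isolated[where u = 0]) (use \<open>i < m\<close> in simp_all)
  ultimately show False by contradiction
qed

lemma opt_tap_eqI:
  assumes "feasible_sol n T xs S\<^sub>0"
    and "\<And>S. feasible_sol n T xs S \<Longrightarrow> sum snd S\<^sub>0 \<le> sum snd S"
  shows "opt_tap n T xs = sum snd S\<^sub>0"
  unfolding opt_tap_def
proof (rule Min_eqI)
  have "{sum snd S |S. feasible_sol n T xs S} \<subseteq> sum snd ` Pow (set xs)"
    by (auto simp: feasible_sol_def)
  then show "finite {sum snd S |S. feasible_sol n T xs S}"
    by (rule finite_subset) simp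
  show "sum snd S\<^sub>0 \<in> {sum snd S |S. feasible_sol n T xs S}"
    using assms(1) by blast
  show "sum snd S\<^sub>0 \<le> y" if "y \<in> {sum snd S |S. feasible_sol n T xs S}" for y
    using that assms(2) by blast
qed

lemma opt_tap_encoding_query_links:
  assumes "i < m"
  shows "feasible_sol (Suc (Suc m)) (star_tree (Suc (Suc m))) (encoding_links m W x @ query_links m i)
           (insert ({0, Suc i}, W ^ x i) (set (query_links m i)))" (is ?feasible)
    and "opt_tap (Suc (Suc m)) (star_tree (Suc (Suc m))) (encoding_links m W x @ query_links m i)
           = W ^ x i" (is ?opt)
proof -
  let ?xs = "encoding_links m W x @ query_links m i"
  let ?S\<^sub>0 = "insert ({0, Suc i}, W ^ x i) (set (query_links m i))"
  have "({0, Suc i}, W ^ x i) \<in> set (encoding_links m W x)"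
    unfolding set_encoding_links using assms by (intro image_eqI[of _ _ i]) auto
  then have "?S\<^sub>0 \<subseteq> set ?xs" by simp
  then show ?feasible
    using augments_star_tree_query_solution[OF assms] by (simp add: feasible_sol_def)
  have "({0, Suc i}, W ^ x i) \<notin> set (query_links m i)"
  proof
    assume "({0, Suc i}, W ^ x i) \<in> set (query_links m i)"
    then consider "{0, Suc i} = {0, Suc m}" | j where "{0, Suc i} = {Suc j, Suc m}"
      by (auto simp: set_query_links)
    then show False
      using assms by cases (auto simp: doubleton_eq_iff)
  qed
  moreover have "sum snd (set (query_links m i)) = 0"
    by (rule sum.neutral) (auto simp: set_query_links)
  ultimately have "sum snd ?S\<^sub>0 = W ^ x i"
    by simp
  moreover have "W ^ x i \<le> sum snd S"
    if "feasible_sol (Suc (Suc m)) (star_tree (Suc (Suc m))) ?xs S" for S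
  proof -
    have "finite S"
      using that by (auto simp: feasible_sol_def intro: finite_subset)
    with feasible_sol_contains_leaf_link[OF assms that] have "snd ({0, Suc i}, W ^ x i) \<le> sum snd S"
      by (intro member_le_sum) auto
    then show ?thesis by simp
  qed
  ultimately show ?opt
    using opt_tap_eqI[OF \<open>?feasible\<close>] by simp
qed

lemma good_estimate_powers_unique:
  assumes "1 \<le> \<alpha>" and W: "\<alpha> * \<alpha> < real W"
    and "good_estimate \<alpha> (real (W ^ k)) y" and "good_estimate \<alpha> (real (W ^ k')) y"
  shows "k = k'"
proof -
  have "1 \<le> \<alpha> * \<alpha>"
    using \<open>1 \<le> \<alpha>\<close> by (metis mult_mono mult_1 zero_le_one order.trans)
  then have "1 \<le> real W" using W by simp
  have not_less: "\<not> a < b"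
    if "good_estimate \<alpha> (real (W ^ a)) y" "good_estimate \<alpha> (real (W ^ b)) y" for a b
  proof
    assume "a < b"
    have "real W ^ b / \<alpha> \<le> \<alpha> * real W ^ a"
      using that unfolding good_estimate_def by auto
    then have "real W ^ b \<le> \<alpha> * \<alpha> * real W ^ a"
      using \<open>1 \<le> \<alpha>\<close> by (simp add: divide_le_eq mult_ac)
    also have "\<dots> < real W * real W ^ a"
      using W \<open>1 \<le> real W\<close> by simp
    also have "\<dots> = real W ^ Suc a" by simp
    also have "\<dots> \<le> real W ^ b"
      using \<open>a < b\<close> \<open>1 \<le> real W\<close> by (intro power_increasing) auto
    finally show False by simp
  qed
  show ?thesis
    using not_less assms(3,4) by (metis linorder_neqE_nat)
qed

lemma pmf_exists_many_successes:
  fixes R :: "'r pmf" and E :: "'r \<Rightarrow> 'y \<Rightarrow> bool"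
  assumes Y: "finite Y" and prob: "\<And>y. y \<in> Y \<Longrightarrow> p \<le> measure_pmf.prob R {r. E r y}"
  shows "\<exists>r\<in>set_pmf R. p * card Y \<le> card {y\<in>Y. E r y}"
proof (rule ccontr)
  define f where "f r = real (card {y\<in>Y. E r y})" for r
  assume "\<not> ?thesis"
  then have less: "AE r in R. f r < p * card Y"
    by (auto intro!: AE_pmfI simp: f_def not_le)
  have f_sum: "f = (\<lambda>r. \<Sum>y\<in>Y. indicator {r. E r y} r)"
    using Y by (auto simp: f_def indicator_def sum.If_cases Int_def)
  have "integrable R f"
    by (rule measure_pmf.integrable_const_bound[where B = "card Y"])
      (auto simp: f_def Y card_mono)
  have "p * card Y \<le> (\<Sum>y\<in>Y. measure_pmf.prob R {r. E r y})"
    using sum_mono[of Y "\<lambda>_. p", OF prob] by (simp add: mult.commute)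
  also have "\<dots> = measure_pmf.expectation R f"
    unfolding f_sum
    by (subst Bochner_Integration.integral_sum)
      (auto intro!: measure_pmf.integrable_const_bound[where B = 1])
  also have "\<dots> < measure_pmf.expectation R (\<lambda>_. p * card Y)"
    by (rule measure_pmf.integral_less_AE_space) (use \<open>integrable R f\<close> less in auto)
  finally show False by simp
qed

lemma card_PiE_pinned_le:
  assumes "S \<subseteq> {..<m}" and pinned: "\<And>i. card (G i \<inter> {..<K}) \<le> 1"
  shows "card (PiE {..<m} (\<lambda>i. if i \<in> S then G i \<inter> {..<K} else {..<K})) \<le> K ^ (m - card S)"
proof -
  have "card (PiE {..<m} (\<lambda>i. if i \<in> S then G i \<inter> {..<K} else {..<K}))
      = (\<Prod>i\<in>{..<m} \<inter> S. card (G i \<inter> {..<K})) * (\<Prod>i\<in>{..<m} - S. K)"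
    by (simp add: card_PiE if_distrib prod.If_cases Diff_eq cong: if_cong)
  also have "\<dots> \<le> 1 * K ^ card ({..<m} - S)"
    by (intro mult_le_mono prod_le_1) (auto intro: le_trans[OF pinned])
  also have "card ({..<m} - S) = m - card S"
    using assms(1) by (simp add: card_Diff_subset finite_subset)
  finally show ?thesis by simp
qed

lemma card_well_decoded_le:
  fixes M :: "(nat \<Rightarrow> nat) \<Rightarrow> 's" and G :: "'s \<Rightarrow> nat \<Rightarrow> nat set"
  assumes Q: "finite Q" and M: "\<And>x. x \<in> {..<m} \<rightarrow>\<^sub>E {..<K} \<Longrightarrow> M x \<in> Q"
    and pinned: "\<And>\<mu> i. card (G \<mu> i \<inter> {..<K}) \<le> 1"
  shows "card {x \<in> {..<m} \<rightarrow>\<^sub>E {..<K}. t \<le> card {i\<in>{..<m}. x i \<in> G (M x) i}}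
          \<le> card Q * 2 ^ m * K ^ (m - t)"
proof -
  define SS where "SS = {S. S \<subseteq> {..<m} \<and> card S = t}"
  define P where "P \<mu> S = PiE {..<m} (\<lambda>i. if i \<in> S then G \<mu> i \<inter> {..<K} else {..<K})" for \<mu> S
  have cover: "{x \<in> {..<m} \<rightarrow>\<^sub>E {..<K}. t \<le> card {i\<in>{..<m}. x i \<in> G (M x) i}}
      \<subseteq> (\<Union>\<mu>\<in>Q. \<Union>S\<in>SS. P \<mu> S)"
  proof
    fix x assume "x \<in> {x \<in> {..<m} \<rightarrow>\<^sub>E {..<K}. t \<le> card {i\<in>{..<m}. x i \<in> G (M x) i}}"
    then have x: "x \<in> {..<m} \<rightarrow>\<^sub>E {..<K}" and t: "t \<le> card {i\<in>{..<m}. x i \<in> G (M x) i}"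
      by auto
    obtain S where S: "S \<subseteq> {i\<in>{..<m}. x i \<in> G (M x) i}" "card S = t"
      using obtain_subset_with_card_n[OF t] by blast
    have "S \<in> SS" using S by (auto simp: SS_def)
    moreover have "x \<in> P (M x) S" using x S by (auto simp: P_def PiE_iff)
    ultimately show "x \<in> (\<Union>\<mu>\<in>Q. \<Union>S\<in>SS. P \<mu> S)" using M[OF x] by blast
  qed
  have "finite SS" by (simp add: SS_def)
  have "card SS \<le> 2 ^ m"
    using card_mono[of "Pow {..<m}" SS] by (auto simp: SS_def card_Pow)
  have card_P: "card (P \<mu> S) \<le> K ^ (m - t)" if "S \<in> SS" for \<mu> S
    using card_PiE_pinned_le[of S m "G \<mu>" K] that pinned by (auto simp: P_def SS_def)
  have "card {x \<in> {..<m} \<rightarrow>\<^sub>E {..<K}. t \<le> card {i\<in>{..<m}. x i \<in> G (M x) i}}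
      \<le> card (\<Union>\<mu>\<in>Q. \<Union>S\<in>SS. P \<mu> S)"
    using Q \<open>finite SS\<close> by (intro card_mono[OF _ cover]) (auto simp: P_def intro!: finite_PiE)
  also have "\<dots> \<le> (\<Sum>\<mu>\<in>Q. \<Sum>S\<in>SS. card (P \<mu> S))"
    using Q \<open>finite SS\<close> by (intro card_UN_le[THEN order_trans] sum_mono card_UN_le)
  also have "\<dots> \<le> (\<Sum>\<mu>\<in>Q. \<Sum>S\<in>SS. K ^ (m - t))"
    by (intro sum_mono card_P)
  also have "\<dots> \<le> card Q * (2 ^ m * K ^ (m - t))"
    using \<open>card SS \<le> 2 ^ m\<close> by simp
  finally show ?thesis by (simp add: mult.assoc)
qed

lemma card_decoded_pairs_le:
  fixes M :: "(nat \<Rightarrow> nat) \<Rightarrow> 's" and G :: "'s \<Rightarrow> nat \<Rightarrow> nat set"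
  assumes "finite Q" and "\<And>x. x \<in> {..<m} \<rightarrow>\<^sub>E {..<K} \<Longrightarrow> M x \<in> Q"
    and "\<And>\<mu> i. card (G \<mu> i \<inter> {..<K}) \<le> 1"
  shows "card {(x, i). x \<in> {..<m} \<rightarrow>\<^sub>E {..<K} \<and> i < m \<and> x i \<in> G (M x) i}
          \<le> m * (card Q * 2 ^ m * K ^ (m - t)) + t * K ^ m"
proof -
  define X where "X = {..<m} \<rightarrow>\<^sub>E {..<K}"
  define C where "C x = {i\<in>{..<m}. x i \<in> G (M x) i}" for x
  define good where "good = {x\<in>X. t \<le> card (C x)}"
  have "finite X" by (simp add: X_def finite_PiE)
  have "good \<subseteq> X" by (auto simp: good_def)
  have "card good \<le> card Q * 2 ^ m * K ^ (m - t)"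
    unfolding good_def X_def C_def using assms by (rule card_well_decoded_le)
  have C_le: "card (C x) \<le> m" for x
    using card_mono[of "{..<m}" "C x"] by (auto simp: C_def)
  have "{(x, i). x \<in> X \<and> i < m \<and> x i \<in> G (M x) i} = Sigma X C"
    by (auto simp: C_def)
  then have "card {(x, i). x \<in> X \<and> i < m \<and> x i \<in> G (M x) i} = (\<Sum>x\<in>X. card (C x))"
    using \<open>finite X\<close> by (simp add: card_SigmaI C_def)
  also have "\<dots> = (\<Sum>x\<in>good. card (C x)) + (\<Sum>x\<in>X - good. card (C x))"
    using sum.subset_diff[OF \<open>good \<subseteq> X\<close> \<open>finite X\<close>] by (simp add: add.commute)
  also have "\<dots> \<le> card good * m + card X * t"
  proof (intro add_mono)
    show "(\<Sum>x\<in>good. card (C x)) \<le> card good * m"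
      using sum_bounded_above[of good "\<lambda>x. card (C x)" m] C_le by simp
    have "(\<Sum>x\<in>X - good. card (C x)) \<le> card (X - good) * t"
      using sum_bounded_above[of "X - good" "\<lambda>x. card (C x)" t] by (force simp: good_def)
    also have "\<dots> \<le> card X * t"
      using \<open>finite X\<close> by (intro mult_le_mono1 card_mono) auto
    finally show "(\<Sum>x\<in>X - good. card (C x)) \<le> card X * t" .
  qed
  also have "\<dots> \<le> m * (card Q * 2 ^ m * K ^ (m - t)) + t * K ^ m"
    using \<open>card good \<le> _\<close> by (simp add: X_def card_PiE mult.commute)
  finally show ?thesis unfolding X_def .
qed

lemma space_ge_of_decoding_bound:
  fixes p :: real
  assumes bound: "p * (real m * 256 ^ m)
      \<le> real m * (2 ^ s * 2 ^ m * 256 ^ (m - m div 2)) + real (m div 2) * 256 ^ m"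
    and large: "8 < (p - 1/2) * 4 ^ m"
  shows "m \<le> s"
proof (rule ccontr)
  define t where "t = m div 2"
  assume "\<not> m \<le> s"
  then have "0 < m" "s + 1 + m \<le> 2 * m" by auto
  have "real t \<le> real m / 2"
    by (simp add: t_def)
  have "(p - 1/2) * (real m * 256 ^ m) \<le> p * (real m * 256 ^ m) - real t * 256 ^ m"
    using \<open>real t \<le> real m / 2\<close> by (simp add: algebra_simps)
  also have "\<dots> \<le> real m * (2 ^ s * 2 ^ m * 256 ^ (m - t))"
    using bound by (simp add: t_def)
  finally have "real m * ((p - 1/2) * 256 ^ m) \<le> real m * (2 ^ s * 2 ^ m * 256 ^ (m - t))"
    by (simp only: mult_ac)
  then have "(p - 1/2) * 256 ^ m \<le> 2 ^ s * 2 ^ m * 256 ^ (m - t)"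
    using \<open>0 < m\<close> by simp
  moreover have "(256::real) ^ m = 256 ^ t * 256 ^ (m - t)"
    by (simp add: t_def flip: power_add)
  ultimately have decode: "(p - 1/2) * 256 ^ t \<le> 2 ^ s * 2 ^ m"
    by simp
  have "(4::real) ^ (2 * m) \<le> 4 ^ (4 * t + 2)"
    by (intro power_increasing) (auto simp: t_def)
  then have "(4::real) ^ m * 4 ^ m \<le> 16 * 256 ^ t"
    by (simp add: power_add power_mult mult_2)
  have "(2::real) ^ (s + 1 + m) \<le> 2 ^ (2 * m)"
    using \<open>s + 1 + m \<le> 2 * m\<close> by (intro power_increasing) auto
  then have "2 * (2 ^ s * 2 ^ m) \<le> (4::real) ^ m"
    by (simp add: power_add power_mult)
  have "0 < p - 1/2"
    using zero_less_mult_pos2[of "p - 1/2" "4 ^ m"] large by simp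
  have "(p - 1/2) * 4 ^ m * 4 ^ m \<le> (p - 1/2) * (16 * 256 ^ t)"
    using \<open>4 ^ m * 4 ^ m \<le> 16 * 256 ^ t\<close> \<open>0 < p - 1/2\<close> by (simp add: mult.assoc)
  also have "\<dots> \<le> 16 * (2 ^ s * 2 ^ m)"
    using decode by simp
  also have "\<dots> \<le> 8 * 4 ^ m"
    using \<open>2 * (2 ^ s * 2 ^ m) \<le> 4 ^ m\<close> by linarith
  finally show False
    using large by simp
qed

lemma run_append: "run init step r (xs @ ys) = foldl (step r) (run init step r xs) ys"
  by (simp add: run_def)

lemma tap_streaming_star_tree_decoding_bound:
  fixes R :: "'r pmf" and init :: "'r \<Rightarrow> 's" and step :: "'r \<Rightarrow> 's \<Rightarrow> nat set \<times> nat \<Rightarrow> 's"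
    and out :: "'r \<Rightarrow> 's \<Rightarrow> real"
  assumes "1 \<le> \<alpha>"
    and alg: "tap_streaming_alg (Suc (Suc m)) (star_tree (Suc (Suc m))) \<alpha> p R init step out"
    and space: "uses_space (Suc (Suc m)) R init step s"
  shows "p * (real m * real K ^ m)
           \<le> real m * (2 ^ s * 2 ^ m * real K ^ (m - t)) + real t * real K ^ m"
proof -
  let ?n = "Suc (Suc m)"
  define W where "W = nat \<lceil>\<alpha> * \<alpha>\<rceil> + 1"
  have "\<alpha> * \<alpha> < real W"
    using le_of_int_ceiling[of "\<alpha> * \<alpha>"] unfolding W_def by simp linarith
  define X where "X = {..<m} \<rightarrow>\<^sub>E {..<K}"
  define Y where "Y = X \<times> {..<m}"
  define E where "E r = (\<lambda>(x, i). good_estimate \<alpha> (real (W ^ x i))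
      (out r (run init step r (encoding_links m W x @ query_links m i))))" for r
  have "finite Y" by (simp add: Y_def X_def finite_PiE)
  have "p \<le> measure_pmf.prob R {r. E r y}" if "y \<in> Y" for y
  proof -
    obtain x i where y: "y = (x, i)" "i < m" using \<open>y \<in> Y\<close> by (auto simp: Y_def)
    have "valid_stream ?n (encoding_links m W x @ query_links m i)"
      by (rule valid_stream_encoding_query_links)
    moreover have "tap_feasible ?n (star_tree ?n) (encoding_links m W x @ query_links m i)"
      using opt_tap_encoding_query_links(1)[OF \<open>i < m\<close>] unfolding tap_feasible_def by blast
    ultimately have "p \<le> measure_pmf.prob R {r. good_estimate \<alpha>
        (real (opt_tap ?n (star_tree ?n) (encoding_links m W x @ query_links m i)))
        (out r (run init step r (encoding_links m W x @ query_links m i)))}"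
      using alg unfolding tap_streaming_alg_def by blast
    then show ?thesis
      by (simp add: opt_tap_encoding_query_links(2)[OF \<open>i < m\<close>] E_def y)
  qed
  then obtain r where "r \<in> set_pmf R" and many_good: "p * card Y \<le> card {y\<in>Y. E r y}"
    using pmf_exists_many_successes[OF \<open>finite Y\<close>] by blast
  define Q where "Q = {run init step r xs |r xs. r \<in> set_pmf R \<and> valid_stream ?n xs}"
  have "finite Q" "card Q \<le> 2 ^ s"
    using space by (simp_all add: uses_space_def Q_def Let_def)
  define M where "M x = run init step r (encoding_links m W x)" for x
  define G where
    "G \<mu> i = {k. good_estimate \<alpha> (real (W ^ k)) (out r (foldl (step r) \<mu> (query_links m i)))}" for \<mu> i
  have "M x \<in> Q" for x
    using valid_stream_appendD[OF valid_stream_encoding_query_links] \<open>r \<in> set_pmf R\<close>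
    unfolding M_def Q_def by blast
  moreover have "card (G \<mu> i \<inter> {..<K}) \<le> 1" for \<mu> i
    using good_estimate_powers_unique[OF \<open>1 \<le> \<alpha>\<close> \<open>\<alpha> * \<alpha> < real W\<close>]
    by (auto simp: card_le_Suc0_iff_eq G_def)
  ultimately have "card {(x, i). x \<in> X \<and> i < m \<and> x i \<in> G (M x) i}
      \<le> m * (card Q * 2 ^ m * K ^ (m - t)) + t * K ^ m"
    unfolding X_def by (intro card_decoded_pairs_le[OF \<open>finite Q\<close>])
  moreover have "{y\<in>Y. E r y} = {(x, i). x \<in> X \<and> i < m \<and> x i \<in> G (M x) i}"
    by (auto simp: Y_def E_def G_def M_def run_append)
  ultimately have "card {y\<in>Y. E r y} \<le> m * (card Q * 2 ^ m * K ^ (m - t)) + t * K ^ m"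
    by simp
  then have "real (card {y\<in>Y. E r y}) \<le> real (m * (card Q * 2 ^ m * K ^ (m - t)) + t * K ^ m)"
    by (rule of_nat_mono)
  also have "\<dots> = m * (card Q * 2 ^ m * real K ^ (m - t)) + t * real K ^ m"
    by simp
  also have "\<dots> \<le> m * (2 ^ s * 2 ^ m * real K ^ (m - t)) + t * real K ^ m"
    using \<open>card Q \<le> 2 ^ s\<close> by (intro add_right_mono mult_left_mono mult_right_mono) auto
  finally show ?thesis
    using many_good by (simp add: Y_def X_def card_cartesian_product card_PiE mult_ac)
qed

lemma tap_streaming_star_tree_space_ge:
  assumes "1 \<le> \<alpha>" and "8 < (p - 1/2) * 4 ^ m"
    and "tap_streaming_alg (Suc (Suc m)) (star_tree (Suc (Suc m))) \<alpha> p R init step out"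
    and "uses_space (Suc (Suc m)) R init step s"
  shows "m \<le> s"
  using tap_streaming_star_tree_decoding_bound[OF assms(1,3,4), of 256 "m div 2"] assms(2)
  by (intro space_ge_of_decoding_bound) simp_all

theorem mainTheorem6:
  fixes p :: real
  assumes "p > 1/2"
  shows "\<exists>c>0. \<exists>n0::nat. \<forall>n\<ge>n0. \<forall>(\<alpha>::real) (s::nat)
           (R :: nat set set \<Rightarrow> 'r pmf) (init :: nat set set \<Rightarrow> 'r \<Rightarrow> 's)
           (step :: nat set set \<Rightarrow> 'r \<Rightarrow> 's \<Rightarrow> nat set \<times> nat \<Rightarrow> 's)
           (out :: nat set set \<Rightarrow> 'r \<Rightarrow> 's \<Rightarrow> real).
           \<alpha> \<ge> 1 \<and>
           (\<forall>T. spanning_tree n T \<longrightarrow>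
              tap_streaming_alg n T \<alpha> p (R T) (init T) (step T) (out T) \<and>
              uses_space n (R T) (init T) (step T) s)
           \<longrightarrow> c * real n \<le> real s"
proof -
  obtain m\<^sub>0 :: nat where "8 / (p - 1/2) < 4 ^ m\<^sub>0"
    using real_arch_pow[of 4] by auto
  then have large: "8 < (p - 1/2) * 4 ^ m\<^sub>0"
    using assms by (simp add: field_simps)
  show ?thesis
  proof (intro exI[of _ "1/2"] exI[of _ "m\<^sub>0 + 4"] conjI allI impI)
    fix n :: nat and \<alpha> :: real and s :: nat and R :: "nat set set \<Rightarrow> 'r pmf"
      and init :: "nat set set \<Rightarrow> 'r \<Rightarrow> 's"
      and step :: "nat set set \<Rightarrow> 'r \<Rightarrow> 's \<Rightarrow> nat set \<times> nat \<Rightarrow> 's"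
      and out :: "nat set set \<Rightarrow> 'r \<Rightarrow> 's \<Rightarrow> real"
    assume "m\<^sub>0 + 4 \<le> n" and alg: "\<alpha> \<ge> 1 \<and> (\<forall>T. spanning_tree n T \<longrightarrow>
              tap_streaming_alg n T \<alpha> p (R T) (init T) (step T) (out T) \<and>
              uses_space n (R T) (init T) (step T) s)"
    define m where "m = n - 2"
    have n: "n = Suc (Suc m)" and "m\<^sub>0 + 2 \<le> m"
      using \<open>m\<^sub>0 + 4 \<le> n\<close> by (auto simp: m_def)
    have "spanning_tree n (star_tree n)"
      by (rule spanning_tree_star_tree) (simp add: n)
    moreover have "(p - 1/2) * 4 ^ m\<^sub>0 \<le> (p - 1/2) * 4 ^ m"
      using assms \<open>m\<^sub>0 + 2 \<le> m\<close> by (intro mult_left_mono power_increasing) auto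
    ultimately have "m \<le> s"
      using alg large tap_streaming_star_tree_space_ge[of \<alpha> p m] unfolding n by force
    then show "1/2 * real n \<le> real s"
      using \<open>m\<^sub>0 + 2 \<le> m\<close> by (simp add: n)
  qed simp
qed

end
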